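(* Let $B_{\mathrm{unl}}(x,y)=\sum_{i,j\ge0}b_{i,j}x^iy^j$, where $b_{i,j}$ is the number of isomorphism classes of bicoloured graphs with $i$ vertices in the first colour class and $j$ in the second, and let $T_{\mathrm{unl}}(x,y)=\sum_{i,j\ge0}\tau_{i,j}x^iy^j$, where $\tau_{i,j}$ is the number of isomorphism classes of tangles with $i$ vertices in the first colour class and $j$ in the second. Then \[T_{\mathrm{unl}}(x,y)=1-x-y-B_{\mathrm{unl}}(x,y)^{-1}.\]
   Context: A bicoloured graph is a triple $G=(V_1,V_2,E)$ with $V_1,V_2$ disjoint finite sets (ordered colour classes) and $E\subseteq V_1\times V_2$; isomorphisms are graph isomorphisms mapping $V_1$ to $V_1$ and $V_2$ to $V_2$. For a vertex $u$ let $N(u)$ be its set of neighbours. $G$ is called a tangle if $|V_1|\ge2$, $|V_2|\ge2$, the graph on $V_2$ joining $a,b$ whenever neither of $N(a),N(b)$ contains the other is connected, and the graph on $V_1$ defined by the same rule is connected. (Equivalently, viewing $G$ as the poset on $V_1\cup V_2$ with $u<w$ iff $u\in V_1,w\in V_2$, $(u,w)\in E$, the whole poset is a single tangle, i.e. a component of $(2+2)$-connectedness with top $V_2$ and bottom $V_1$.) *)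

theory Defs
  imports "HOL-Computational_Algebra.Formal_Power_Series"
begin

text \<open>A bicoloured graph with i vertices in the first colour class and j in the second
  is represented (up to isomorphism) by an edge set E \<subseteq> {..<i} \<times> {..<j},
  with V1 = {..<i} and V2 = {..<j}.\<close>

definition bigraphs :: "nat \<Rightarrow> nat \<Rightarrow> (nat \<times> nat) set set" where
  "bigraphs i j = {E. E \<subseteq> {..<i} \<times> {..<j}}"

definition bigraph_iso :: "nat \<Rightarrow> nat \<Rightarrow> ((nat \<times> nat) set \<times> (nat \<times> nat) set) set" where
  "bigraph_iso i j = {(E, E'). E \<in> bigraphs i j \<and> E' \<in> bigraphs i j \<and>
      (\<exists>f g. bij_betw f {..<i} {..<i} \<and> bij_betw g {..<j} {..<j} \<and>
             E' = (\<lambda>(u, w). (f u, g w)) ` E)}"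

definition nbhd2 :: "(nat \<times> nat) set \<Rightarrow> nat \<Rightarrow> nat set" where
  "nbhd2 E a = {u. (u, a) \<in> E}"

definition nbhd1 :: "(nat \<times> nat) set \<Rightarrow> nat \<Rightarrow> nat set" where
  "nbhd1 E u = {w. (u, w) \<in> E}"

definition incomp_graph :: "nat set \<Rightarrow> (nat \<Rightarrow> nat set) \<Rightarrow> (nat \<times> nat) set" where
  "incomp_graph V N = {(a, b). a \<in> V \<and> b \<in> V \<and> \<not> N a \<subseteq> N b \<and> \<not> N b \<subseteq> N a}"

definition connected_on :: "nat set \<Rightarrow> (nat \<times> nat) set \<Rightarrow> bool" where
  "connected_on V R \<longleftrightarrow> (\<forall>a\<in>V. \<forall>b\<in>V. (a, b) \<in> R\<^sup>*)"

definition is_tangle :: "nat \<Rightarrow> nat \<Rightarrow> (nat \<times> nat) set \<Rightarrow> bool" where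
  "is_tangle i j E \<longleftrightarrow> E \<in> bigraphs i j \<and> i \<ge> 2 \<and> j \<ge> 2 \<and>
     connected_on {..<j} (incomp_graph {..<j} (nbhd2 E)) \<and>
     connected_on {..<i} (incomp_graph {..<i} (nbhd1 E))"

definition bcount :: "nat \<Rightarrow> nat \<Rightarrow> nat" where
  "bcount i j = card (bigraphs i j // bigraph_iso i j)"

definition tcount :: "nat \<Rightarrow> nat \<Rightarrow> nat" where
  "tcount i j = card ({E. is_tangle i j E} // bigraph_iso i j)"

text \<open>Bivariate formal power series over Q as power series in x whose coefficients are
  power series in y: the coefficient of x^i y^j of F is F $ i $ j.\<close>
definition bivar_gf :: "(nat \<Rightarrow> nat \<Rightarrow> nat) \<Rightarrow> rat fps fps" where
  "bivar_gf c = Abs_fps (\<lambda>i. Abs_fps (\<lambda>j. of_nat (c i j)))"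

abbreviation X_var :: "rat fps fps" where "X_var \<equiv> fps_X"
abbreviation Y_var :: "rat fps fps" where "Y_var \<equiv> fps_const fps_X"

end

theory Submission
  imports Defs
begin

text \<open>A bicoloured graph splits along any top (\<open>is_top\<close>): it is the sum (\<open>bigraph_sum\<close>) of the
  part outside the top and the part induced on it. Every nonempty graph has a minimal nonempty top,
  whose sizes are an isomorphism invariant (two different minimal tops are twin single vertices), so
  the graph is, uniquely up to isomorphism, the sum of an arbitrary graph and an indecomposable one.
  Hence \<open>B = 1 + B C\<close>, where \<open>C\<close> counts indecomposable graphs, i.e. \<open>B\<^sup>-\<^sup>1 = 1 - C\<close>. Finally the
  indecomposable graphs are exactly the tangles and the two single vertices, so \<open>C = T + x + y\<close>.\<close>

lemma endo_bij_betw: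
  assumes "inj_on f {..<n::nat}" "f ` {..<n} \<subseteq> {..<n}"
  shows "bij_betw f {..<n} {..<n}"
  using endo_inj_surj[OF finite_lessThan assms(2,1)] assms(1) by (simp add: bij_betw_def)

lemma image_add_right_lessThan: "(\<lambda>u. u + i0) ` {..<k} = {i0..<i0 + (k::nat)}"
  by (simp add: lessThan_atLeast0 add.commute)

lemma lessThan_add_diff_image:
  "A \<subseteq> {..<k::nat} \<Longrightarrow> {..<i0 + k} - (\<lambda>u. u + i0) ` A = {..<i0} \<union> (\<lambda>u. u + i0) ` ({..<k} - A)"
proof -
  have "x \<in> (\<lambda>u. u + i0) ` ({..<k} - A)" if "x < i0 + k" "\<not> x < i0" "x \<notin> (\<lambda>u. u + i0) ` A" for x
  proof (rule image_eqI)
    show x: "x = (x - i0) + i0" using that(2) by simp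
    have "x - i0 \<notin> A"
    proof
      assume "x - i0 \<in> A"
      then have "(x - i0) + i0 \<in> (\<lambda>u. u + i0) ` A" by (rule imageI)
      with x that(3) show False by simp
    qed
    with that(1,2) show "x - i0 \<in> {..<k} - A" by simp
  qed
  then show ?thesis by auto
qed

lemma bij_betw_lessThan_add_combine:
  fixes f1 f2 :: "nat \<Rightarrow> nat"
  assumes f1: "bij_betw f1 {..<a} {..<a}" and f2: "bij_betw f2 {..<b} {..<b}"
  shows "bij_betw (\<lambda>u. if u < a then f1 u else f2 (u - a) + a) {..<a + b} {..<a + b}"
proof (rule endo_bij_betw)
  let ?f = "\<lambda>u. if u < a then f1 u else f2 (u - a) + a"
  have low: "f1 u < a" if "u < a" for u using bij_betwE[OF f1] that by auto
  have high: "f2 (u - a) < b" if "u < a + b" "\<not> u < a" for u using bij_betwE[OF f2] that by auto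
  show "?f ` {..<a + b} \<subseteq> {..<a + b}"
    using low high by (auto simp: less_imp_le_nat trans_less_add1)
  show "inj_on ?f {..<a + b}"
  proof (rule inj_onI)
    fix x y assume xy: "x \<in> {..<a + b}" "y \<in> {..<a + b}" "?f x = ?f y"
    consider "x < a" "y < a" | "\<not> x < a" "\<not> y < a" | "(x < a) \<noteq> (y < a)" by blast
    then show "x = y"
    proof cases
      case 1 with xy f1 show ?thesis by (auto simp: bij_betw_def dest: inj_onD)
    next
      case 2
      with xy have "f2 (x - a) = f2 (y - a)" by simp
      with 2 xy f2 show ?thesis by (auto simp: bij_betw_def dest: inj_onD)
    next
      case 3 with xy low show ?thesis by (auto split: if_splits) (metis le_add2 not_less)+
    qed
  qed
qed

lemma bij_betw_lessThan_add_parts: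
  fixes f :: "nat \<Rightarrow> nat"
  assumes f: "bij_betw f {..<a + b} {..<a + b}" and high: "f ` {a..<a + b} = {a..<a + b}"
  shows "bij_betw f {..<a} {..<a}" "bij_betw (\<lambda>u. f (u + a) - a) {..<b} {..<b}"
proof -
  have "bij_betw f {a..<a + b} {a..<a + b}"
    by (rule bij_betw_subset[OF f _ high]) auto
  moreover have "{..<a + b} - {a..<a + b} = {..<a}" by auto
  ultimately show "bij_betw f {..<a} {..<a}"
    using bij_betw_DiffI[OF f] by fastforce
  show "bij_betw (\<lambda>u. f (u + a) - a) {..<b} {..<b}"
  proof (rule endo_bij_betw)
    have into: "a \<le> f (u + a) \<and> f (u + a) < a + b" if "u < b" for u
      using high that by fastforce
    then show "(\<lambda>u. f (u + a) - a) ` {..<b} \<subseteq> {..<b}" by fastforce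
    show "inj_on (\<lambda>u. f (u + a) - a) {..<b}"
    proof (rule inj_onI)
      fix x y assume "x \<in> {..<b}" "y \<in> {..<b}" "f (x + a) - a = f (y + a) - a"
      with into[of x] into[of y] have "f (x + a) = f (y + a)" "x + a < a + b" "y + a < a + b"
        by (simp_all add: eq_diff_iff)
      with f show "x = y" by (auto simp: bij_betw_def dest: inj_onD)
    qed
  qed
qed

lemma bij_betw_swap_lessThan:
  "u < n \<Longrightarrow> v < n \<Longrightarrow> bij_betw (id(u := v, v := u)) {..<n} {..<(n::nat)}"
  by (rule endo_bij_betw) (auto simp: inj_on_def)

lemma ex_bij_betw_onto_upper_interval:
  fixes A :: "nat set"
  assumes A: "A \<subseteq> {..<n + m}" "card A = m"
  shows "\<exists>f. bij_betw f {..<n + m} {..<n + m} \<and> f ` A = {n..<n + m}"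
proof -
  have fin: "finite A" using A(1) finite_subset by blast
  obtain h2 where h2: "bij_betw h2 A {n..<n + m}"
    using finite_same_card_bij[OF fin, of "{n..<n + m}"] A by auto
  obtain h1 where h1: "bij_betw h1 ({..<n + m} - A) {..<n}"
    using finite_same_card_bij[of "{..<n + m} - A" "{..<n}"] A fin by (auto simp: card_Diff_subset)
  define f where "f x = (if x \<in> A then h2 x else h1 x)" for x
  have upper: "bij_betw f A {n..<n + m}"
    using h2 by (subst bij_betw_cong[where g = h2]) (auto simp: f_def)
  have lower: "bij_betw f ({..<n + m} - A) {..<n}"
    using h1 by (subst bij_betw_cong[where g = h1]) (auto simp: f_def)
  have "bij_betw f (A \<union> ({..<n + m} - A)) ({n..<n + m} \<union> {..<n})"
    by (rule bij_betw_combine[OF upper lower]) auto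
  moreover have "A \<union> ({..<n + m} - A) = {..<n + m}" "{n..<n + m} \<union> {..<n} = {..<n + m}"
    using A(1) by auto
  ultimately have "bij_betw f {..<n + m} {..<n + m}" by simp
  moreover have "f ` A = {n..<n + m}"
    using h2 unfolding f_def bij_betw_def by auto
  ultimately show ?thesis by blast
qed

lemma bigraphs_iff: "E \<in> bigraphs i j \<longleftrightarrow> (\<forall>u w. (u, w) \<in> E \<longrightarrow> u < i \<and> w < j)"
  unfolding bigraphs_def by auto

lemma finite_bigraphs: "finite (bigraphs i j)"
  unfolding bigraphs_def by simp

definition iso_by :: "nat \<Rightarrow> nat \<Rightarrow> (nat \<Rightarrow> nat) \<Rightarrow> (nat \<Rightarrow> nat) \<Rightarrow>
    (nat \<times> nat) set \<Rightarrow> (nat \<times> nat) set \<Rightarrow> bool" where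
  "iso_by i j f g E E' \<longleftrightarrow> bij_betw f {..<i} {..<i} \<and> bij_betw g {..<j} {..<j} \<and>
     E \<in> bigraphs i j \<and> E' \<in> bigraphs i j \<and> (\<forall>u<i. \<forall>w<j. (f u, g w) \<in> E' \<longleftrightarrow> (u, w) \<in> E)"

lemma iso_by_image:
  assumes f: "bij_betw f {..<i} {..<i}" and g: "bij_betw g {..<j} {..<j}" and E: "E \<in> bigraphs i j"
  shows "iso_by i j f g E ((\<lambda>(u, w). (f u, g w)) ` E)"
proof -
  have "(\<lambda>(u, w). (f u, g w)) ` E \<in> bigraphs i j"
    using E f g by (auto simp: bigraphs_iff bij_betw_def)
  moreover have "(f u, g w) \<in> (\<lambda>(u, w). (f u, g w)) ` E \<longleftrightarrow> (u, w) \<in> E" if "u < i" "w < j" for u w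
  proof
    assume "(f u, g w) \<in> (\<lambda>(u, w). (f u, g w)) ` E"
    then obtain u' w' where uw': "(u', w') \<in> E" "f u' = f u" "g w' = g w" by auto
    with E have "u' < i" "w' < j" by (auto simp: bigraphs_iff)
    with uw' that have "u' = u" "w' = w"
      using bij_betw_imp_inj_on[OF f] bij_betw_imp_inj_on[OF g] by (auto dest: inj_onD)
    with uw' show "(u, w) \<in> E" by simp
  qed force
  ultimately show ?thesis
    using assms unfolding iso_by_def by blast
qed

lemma iso_by_imp_image:
  assumes "iso_by i j f g E E'"
  shows "E' = (\<lambda>(u, w). (f u, g w)) ` E"
proof -
  from assms have f: "f ` {..<i} = {..<i}" and g: "g ` {..<j} = {..<j}"
    and E: "E \<in> bigraphs i j" "E' \<in> bigraphs i j"
    and edge: "\<And>u w. u < i \<Longrightarrow> w < j \<Longrightarrow> (f u, g w) \<in> E' \<longleftrightarrow> (u, w) \<in> E"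
    unfolding iso_by_def bij_betw_def by auto
  have "(a, b) \<in> (\<lambda>(u, w). (f u, g w)) ` E" if "(a, b) \<in> E'" for a b
  proof -
    from that E(2) have "a \<in> f ` {..<i}" "b \<in> g ` {..<j}"
      unfolding f g by (auto simp: bigraphs_iff)
    then obtain u w where "u < i" "w < j" "a = f u" "b = g w" by auto
    with that edge show ?thesis by force
  qed
  moreover have "(f u, g w) \<in> E'" if "(u, w) \<in> E" for u w
    using that E(1) edge by (auto simp: bigraphs_iff)
  ultimately show ?thesis by auto
qed

lemma bigraph_iso_iff: "(E, E') \<in> bigraph_iso i j \<longleftrightarrow> (\<exists>f g. iso_by i j f g E E')"
proof
  assume "(E, E') \<in> bigraph_iso i j"
  then show "\<exists>f g. iso_by i j f g E E'"
    unfolding bigraph_iso_def using iso_by_image by blast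
next
  assume "\<exists>f g. iso_by i j f g E E'"
  then obtain f g where iso: "iso_by i j f g E E'" by blast
  then show "(E, E') \<in> bigraph_iso i j"
    using iso_by_imp_image[OF iso] unfolding bigraph_iso_def iso_by_def by blast
qed

lemma iso_by_sym:
  assumes iso: "iso_by i j f g E E'"
  shows "iso_by i j (inv_into {..<i} f) (inv_into {..<j} g) E' E"
proof -
  from iso have f: "bij_betw f {..<i} {..<i}" and g: "bij_betw g {..<j} {..<j}"
    unfolding iso_by_def by auto
  have "(inv_into {..<i} f u, inv_into {..<j} g w) \<in> E \<longleftrightarrow> (u, w) \<in> E'" if "u < i" "w < j" for u w
  proof -
    have "inv_into {..<i} f u < i" "inv_into {..<j} g w < j"
      using that bij_betwE[OF bij_betw_inv_into[OF f]] bij_betwE[OF bij_betw_inv_into[OF g]] by auto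
    moreover have "f (inv_into {..<i} f u) = u" "g (inv_into {..<j} g w) = w"
      using that bij_betw_inv_into_right[OF f] bij_betw_inv_into_right[OF g] by auto
    ultimately show ?thesis
      using iso unfolding iso_by_def by metis
  qed
  then show ?thesis
    using iso bij_betw_inv_into[OF f] bij_betw_inv_into[OF g] unfolding iso_by_def by blast
qed

lemma iso_by_trans:
  assumes "iso_by i j f g E E'" "iso_by i j f' g' E' E''"
  shows "iso_by i j (f' \<circ> f) (g' \<circ> g) E E''"
proof -
  from assms have f: "bij_betw f {..<i} {..<i}" and g: "bij_betw g {..<j} {..<j}"
    unfolding iso_by_def by auto
  have "((f' \<circ> f) u, (g' \<circ> g) w) \<in> E'' \<longleftrightarrow> (u, w) \<in> E" if "u < i" "w < j" for u w
    using that assms bij_betwE[OF f] bij_betwE[OF g] unfolding iso_by_def by simp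
  then show ?thesis
    using assms unfolding iso_by_def by (blast intro: bij_betw_trans)
qed

lemma equiv_bigraph_iso: "equiv (bigraphs i j) (bigraph_iso i j)"
proof (rule equivI)
  show "bigraph_iso i j \<subseteq> bigraphs i j \<times> bigraphs i j"
    unfolding bigraph_iso_def by auto
  show "refl_on (bigraphs i j) (bigraph_iso i j)"
    unfolding refl_on_def bigraph_iso_iff iso_by_def
    by (auto simp: bigraph_iso_def intro!: exI[of _ id])
  show "sym (bigraph_iso i j)" unfolding sym_def bigraph_iso_iff using iso_by_sym by blast
  show "trans (bigraph_iso i j)" unfolding trans_def bigraph_iso_iff using iso_by_trans by blast
qed

lemma iso_by_swap_twins1:
  assumes "E \<in> bigraphs i j" "a < i" "b < i" "nbhd1 E a = nbhd1 E b"
  shows "iso_by i j (id(a := b, b := a)) id E E"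
  using assms bij_betw_swap_lessThan[of a i b] unfolding iso_by_def nbhd1_def set_eq_iff by auto

lemma iso_by_swap_twins2:
  assumes "E \<in> bigraphs i j" "a < j" "b < j" "nbhd2 E a = nbhd2 E b"
  shows "iso_by i j id (id(a := b, b := a)) E E"
  using assms bij_betw_swap_lessThan[of a j b] unfolding iso_by_def nbhd2_def set_eq_iff by auto

section \<open>Tops\<close>

text \<open>In the poset picture \<open>A \<union> B\<close> sits above the remaining vertices: those of the first colour lie
  below all of \<open>B\<close>, while the vertices of \<open>A\<close> lie below vertices of \<open>B\<close> only.\<close>
definition is_top :: "nat \<Rightarrow> nat \<Rightarrow> (nat \<times> nat) set \<Rightarrow> nat set \<Rightarrow> nat set \<Rightarrow> bool" where
  "is_top i j E A B \<longleftrightarrow> A \<subseteq> {..<i} \<and> B \<subseteq> {..<j} \<and>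
     (\<forall>u\<in>{..<i} - A. \<forall>w\<in>B. (u, w) \<in> E) \<and> (\<forall>u\<in>A. \<forall>w\<in>{..<j} - B. (u, w) \<notin> E)"

definition min_top :: "nat \<Rightarrow> nat \<Rightarrow> (nat \<times> nat) set \<Rightarrow> nat set \<Rightarrow> nat set \<Rightarrow> bool" where
  "min_top i j E A B \<longleftrightarrow> is_top i j E A B \<and> (A \<noteq> {} \<or> B \<noteq> {}) \<and>
     (\<forall>A'\<subseteq>A. \<forall>B'\<subseteq>B. is_top i j E A' B' \<and> (A' \<noteq> {} \<or> B' \<noteq> {}) \<longrightarrow> A' = A \<and> B' = B)"

lemma is_topD:
  assumes "is_top i j E A B"
  shows "A \<subseteq> {..<i}" "B \<subseteq> {..<j}"
    "\<And>u w. u < i \<Longrightarrow> u \<notin> A \<Longrightarrow> w \<in> B \<Longrightarrow> (u, w) \<in> E"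
    "\<And>u w. u \<in> A \<Longrightarrow> w < j \<Longrightarrow> w \<notin> B \<Longrightarrow> (u, w) \<notin> E"
  using assms unfolding is_top_def by auto

lemma is_top_Int: "is_top i j E A B \<Longrightarrow> is_top i j E A' B' \<Longrightarrow> is_top i j E (A \<inter> A') (B \<inter> B')"
  unfolding is_top_def by blast

lemma min_topD:
  assumes "min_top i j E A B"
  shows "is_top i j E A B" "A \<noteq> {} \<or> B \<noteq> {}" "A \<subseteq> {..<i}" "B \<subseteq> {..<j}"
  using assms by (simp_all add: min_top_def is_top_def)

lemma min_top_minimal:
  "min_top i j E A B \<Longrightarrow> is_top i j E A' B' \<Longrightarrow> A' \<subseteq> A \<Longrightarrow> B' \<subseteq> B \<Longrightarrow> A' \<noteq> {} \<or> B' \<noteq> {} \<Longrightarrow>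
    A' = A \<and> B' = B"
  unfolding min_top_def by blast

lemma min_topI:
  "is_top i j E A B \<Longrightarrow> A \<noteq> {} \<or> B \<noteq> {} \<Longrightarrow>
    (\<And>A' B'. is_top i j E A' B' \<Longrightarrow> A' \<subseteq> A \<Longrightarrow> B' \<subseteq> B \<Longrightarrow> A' \<noteq> {} \<or> B' \<noteq> {} \<Longrightarrow> A' = A \<and> B' = B) \<Longrightarrow>
    min_top i j E A B"
  unfolding min_top_def by blast

lemma is_top_singleton1: "is_top i j E A {} \<Longrightarrow> u \<in> A \<Longrightarrow> is_top i j E {u} {}"
  unfolding is_top_def by blast

lemma is_top_singleton2: "is_top i j E {} B \<Longrightarrow> w \<in> B \<Longrightarrow> is_top i j E {} {w}"
  unfolding is_top_def by blast

lemma is_top_singleton_nbhd: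
  assumes "E \<in> bigraphs i j"
  shows "is_top i j E {u} {} \<Longrightarrow> nbhd1 E u = {}" "is_top i j E {} {w} \<Longrightarrow> nbhd2 E w = {..<i}"
  using assms unfolding is_top_def nbhd1_def nbhd2_def bigraphs_iff by auto

lemma is_top_cross:
  assumes "is_top i j E A B" "is_top i j E A' B'" "u \<in> A" "u \<notin> A'" "w \<in> B'" "w \<notin> B"
  shows False
proof -
  from assms have "u < i" "w < j" unfolding is_top_def by auto
  with assms(2,4,5) have "(u, w) \<in> E" unfolding is_top_def by blast
  with assms(1,3,6) \<open>w < j\<close> show False unfolding is_top_def by blast
qed

text \<open>Two different minimal tops are disjoint, so by \<open>is_top_cross\<close> they both lie in one colour
  class; there every single vertex of a top is already a top.\<close>
lemma min_tops_eq_or_singletons: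
  assumes m: "min_top i j E A B" and m': "min_top i j E A' B'" and ne: "\<not> (A = A' \<and> B = B')"
  shows "(\<exists>u v. A = {u} \<and> A' = {v} \<and> B = {} \<and> B' = {}) \<or>
         (\<exists>w w'. B = {w} \<and> B' = {w'} \<and> A = {} \<and> A' = {})"
proof -
  note t = min_topD(1)[OF m] and t' = min_topD(1)[OF m']
    and ne1 = min_topD(2)[OF m] and ne2 = min_topD(2)[OF m']
  have disj: "A \<inter> A' = {} \<and> B \<inter> B' = {}"
  proof (rule ccontr)
    assume "\<not> ?thesis"
    then have "A \<inter> A' = A \<and> B \<inter> B' = B" "A \<inter> A' = A' \<and> B \<inter> B' = B'"
      using min_top_minimal[OF m is_top_Int[OF t t']] min_top_minimal[OF m' is_top_Int[OF t t']] by auto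
    with ne show False by blast
  qed
  have "A = {} \<or> B' = {}" "A' = {} \<or> B = {}"
    using is_top_cross[OF t t'] is_top_cross[OF t' t] disj by blast+
  then consider "B = {}" "B' = {}" | "A = {}" "A' = {}"
    using ne1 ne2 by blast
  then show ?thesis
  proof cases
    case 1
    with ne1 ne2 obtain u v where u: "u \<in> A" and v: "v \<in> A'" by blast
    have "A = {u}" "A' = {v}"
      using min_top_minimal[OF m is_top_singleton1[OF t[unfolded 1(1)] u]]
        min_top_minimal[OF m' is_top_singleton1[OF t'[unfolded 1(2)] v]] u v by auto
    with 1 show ?thesis by blast
  next
    case 2
    with ne1 ne2 obtain w w' where w: "w \<in> B" and w': "w' \<in> B'" by blast
    have "B = {w}" "B' = {w'}"
      using min_top_minimal[OF m is_top_singleton2[OF t[unfolded 2(1)] w]]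
        min_top_minimal[OF m' is_top_singleton2[OF t'[unfolded 2(2)] w']] w w' by auto
    with 2 show ?thesis by blast
  qed
qed

lemma min_tops_same_card:
  assumes "min_top i j E A B" "min_top i j E A' B'"
  shows "card A = card A' \<and> card B = card B'"
  using min_tops_eq_or_singletons[OF assms] by (cases "A = A' \<and> B = B'") auto

lemma min_top_exists:
  assumes "(i, j) \<noteq> (0, 0)"
  shows "\<exists>A B. min_top i j E A B"
proof -
  define P where "P AB \<longleftrightarrow> is_top i j E (fst AB) (snd AB) \<and> (fst AB \<noteq> {} \<or> snd AB \<noteq> {})" for AB
  have "P ({..<i}, {..<j})" using assms unfolding P_def is_top_def by auto
  then have "\<exists>AB. P AB \<and> (\<forall>AB'. P AB' \<longrightarrow> card (fst AB) + card (snd AB) \<le> card (fst AB') + card (snd AB'))"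
    by (rule ex_has_least_nat)
  then obtain AB where P: "P AB"
    and least: "\<forall>AB'. P AB' \<longrightarrow> card (fst AB) + card (snd AB) \<le> card (fst AB') + card (snd AB')"
    by blast
  define A B where "A = fst AB" and "B = snd AB"
  have top: "is_top i j E A B" and ne: "A \<noteq> {} \<or> B \<noteq> {}"
    using P unfolding P_def A_def B_def by auto
  then have fin: "finite A" "finite B"
    unfolding is_top_def by (auto intro: finite_subset)
  have minimal: "A' = A \<and> B' = B"
    if "is_top i j E A' B'" "A' \<subseteq> A" "B' \<subseteq> B" "A' \<noteq> {} \<or> B' \<noteq> {}" for A' B'
  proof -
    have "P (A', B')" using that(1,4) unfolding P_def by simp
    then have "card A + card B \<le> card A' + card B'"
      using least unfolding A_def B_def by force
    moreover have "card A' \<le> card A" "card B' \<le> card B"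
      using card_mono fin that(2,3) by blast+
    ultimately have "card A' = card A" "card B' = card B" by linarith+
    then show ?thesis
      using card_subset_eq fin that(2,3) by blast
  qed
  show ?thesis using min_topI[OF top ne minimal] by blast
qed

lemma iso_by_is_top_iff:
  assumes iso: "iso_by i j f g E E'" and A: "A \<subseteq> {..<i}" and B: "B \<subseteq> {..<j}"
  shows "is_top i j E' (f ` A) (g ` B) \<longleftrightarrow> is_top i j E A B"
proof -
  from iso have f: "bij_betw f {..<i} {..<i}" and g: "bij_betw g {..<j} {..<j}"
    and edge: "\<And>u w. u < i \<Longrightarrow> w < j \<Longrightarrow> (f u, g w) \<in> E' \<longleftrightarrow> (u, w) \<in> E"
    unfolding iso_by_def by auto
  have compl: "{..<i} - f ` A = f ` ({..<i} - A)" "{..<j} - g ` B = g ` ({..<j} - B)"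
    using bij_betw_imp_surj_on[OF f] bij_betw_imp_surj_on[OF g] A B
      inj_on_image_set_diff[OF bij_betw_imp_inj_on[OF f]] inj_on_image_set_diff[OF bij_betw_imp_inj_on[OF g]]
    by auto
  have "(\<forall>u\<in>f ` ({..<i} - A). \<forall>w\<in>g ` B. (u, w) \<in> E') \<longleftrightarrow> (\<forall>u\<in>{..<i} - A. \<forall>w\<in>B. (u, w) \<in> E)"
    using edge B by (auto simp: subset_iff)
  moreover have "(\<forall>u\<in>f ` A. \<forall>w\<in>g ` ({..<j} - B). (u, w) \<notin> E') \<longleftrightarrow> (\<forall>u\<in>A. \<forall>w\<in>{..<j} - B. (u, w) \<notin> E)"
    using edge A by (auto simp: subset_iff)
  moreover have "f ` A \<subseteq> {..<i}" "g ` B \<subseteq> {..<j}"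
    using A B bij_betwE[OF f] bij_betwE[OF g] by auto
  ultimately show ?thesis
    using A B unfolding is_top_def compl by blast
qed

lemma iso_by_min_top:
  assumes iso: "iso_by i j f g E E'" and m: "min_top i j E A B"
  shows "min_top i j E' (f ` A) (g ` B)"
proof -
  note A = min_topD(3)[OF m] and B = min_topD(4)[OF m]
  from iso have f: "bij_betw f {..<i} {..<i}" and g: "bij_betw g {..<j} {..<j}"
    unfolding iso_by_def by auto
  have minimal: "A'' = f ` A \<and> B'' = g ` B"
    if top: "is_top i j E' A'' B''" and sub: "A'' \<subseteq> f ` A" "B'' \<subseteq> g ` B"
      and ne: "A'' \<noteq> {} \<or> B'' \<noteq> {}" for A'' B''
  proof -
    obtain A0 B0 where A0: "A0 \<subseteq> A" "A'' = f ` A0" and B0: "B0 \<subseteq> B" "B'' = g ` B0"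
      using sub by (auto simp: subset_image_iff)
    have "is_top i j E A0 B0"
      using iso_by_is_top_iff[OF iso] top A0 B0 A B by blast
    with A0 B0 ne have "A0 = A \<and> B0 = B" using min_top_minimal[OF m] by blast
    with A0 B0 show ?thesis by simp
  qed
  then show ?thesis
    using min_topD(1,2)[OF m] iso_by_is_top_iff[OF iso A B] by (intro min_topI[OF _ _ minimal]) auto
qed

definition min_top_class :: "nat \<Rightarrow> nat \<Rightarrow> nat \<Rightarrow> nat \<Rightarrow> (nat \<times> nat) set set" where
  "min_top_class i j k l = {E \<in> bigraphs i j. \<exists>A B. min_top i j E A B \<and> card A = k \<and> card B = l}"

lemma min_top_class_iso:
  assumes "E \<in> min_top_class i j k l" "(E, E') \<in> bigraph_iso i j"
  shows "E' \<in> min_top_class i j k l"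
proof -
  obtain f g where iso: "iso_by i j f g E E'" using assms(2) bigraph_iso_iff by blast
  then have f: "inj_on f {..<i}" and g: "inj_on g {..<j}" and E': "E' \<in> bigraphs i j"
    unfolding iso_by_def bij_betw_def by auto
  obtain A B where m: "min_top i j E A B" and card: "card A = k" "card B = l"
    using assms(1) unfolding min_top_class_def by auto
  have "card (f ` A) = k" "card (g ` B) = l"
    using card card_image inj_on_subset[OF f min_topD(3)[OF m]] inj_on_subset[OF g min_topD(4)[OF m]]
    by auto
  with iso_by_min_top[OF iso m] E' show ?thesis
    unfolding min_top_class_def by blast
qed

lemma min_top_class_unique:
  "E \<in> min_top_class i j k l \<Longrightarrow> E \<in> min_top_class i j k' l' \<Longrightarrow> k = k' \<and> l = l'"
  using min_tops_same_card unfolding min_top_class_def by blast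

section \<open>Sums and indecomposable graphs\<close>

text \<open>\<open>F\<close> is placed above \<open>E\<close> on the vertices shifted by \<open>i0\<close> and \<open>j0\<close>; every first-colour vertex of
  \<open>E\<close> is joined to every second-colour vertex of \<open>F\<close>, with no other edges between the parts.\<close>
definition bigraph_sum :: "nat \<Rightarrow> nat \<Rightarrow> (nat \<times> nat) set \<Rightarrow> nat \<Rightarrow> nat \<Rightarrow> (nat \<times> nat) set \<Rightarrow>
    (nat \<times> nat) set" where
  "bigraph_sum i0 j0 E k l F = {(u, w). u < i0 + k \<and> w < j0 + l \<and>
     (if u < i0 then (w < j0 \<longrightarrow> (u, w) \<in> E) else (j0 \<le> w \<and> (u - i0, w - j0) \<in> F))}"

lemma bigraph_sum_in_bigraphs: "bigraph_sum i0 j0 E k l F \<in> bigraphs (i0 + k) (j0 + l)"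
  unfolding bigraph_sum_def bigraphs_def by auto

lemma bigraph_sum_low: "u < i0 \<Longrightarrow> w < j0 \<Longrightarrow> (u, w) \<in> bigraph_sum i0 j0 E k l F \<longleftrightarrow> (u, w) \<in> E"
  unfolding bigraph_sum_def by auto

lemma bigraph_sum_high:
  "u < k \<Longrightarrow> w < l \<Longrightarrow> (u + i0, w + j0) \<in> bigraph_sum i0 j0 E k l F \<longleftrightarrow> (u, w) \<in> F"
  unfolding bigraph_sum_def by auto

lemma bigraph_sum_cross:
  "u < i0 \<Longrightarrow> j0 \<le> w \<Longrightarrow> w < j0 + l \<Longrightarrow> (u, w) \<in> bigraph_sum i0 j0 E k l F"
  "i0 \<le> u \<Longrightarrow> w < j0 \<Longrightarrow> (u, w) \<notin> bigraph_sum i0 j0 E k l F"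
  unfolding bigraph_sum_def by auto

lemma bigraph_sum_is_top_iff:
  assumes A: "A \<subseteq> {..<k}" and B: "B \<subseteq> {..<l}"
  shows "is_top (i0 + k) (j0 + l) (bigraph_sum i0 j0 E k l F) ((\<lambda>u. u + i0) ` A) ((\<lambda>w. w + j0) ` B)
    \<longleftrightarrow> is_top k l F A B"
proof -
  let ?S = "bigraph_sum i0 j0 E k l F"
  have "(\<forall>u\<in>{..<i0} \<union> (\<lambda>u. u + i0) ` ({..<k} - A). \<forall>w\<in>(\<lambda>w. w + j0) ` B. (u, w) \<in> ?S)
      \<longleftrightarrow> (\<forall>u\<in>{..<k} - A. \<forall>w\<in>B. (u, w) \<in> F)"
  proof -
    have "\<forall>u<i0. \<forall>w\<in>(\<lambda>w. w + j0) ` B. (u, w) \<in> ?S"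
      using B by (auto intro!: bigraph_sum_cross(1))
    moreover have "(\<forall>u\<in>{..<k} - A. \<forall>w\<in>B. (u + i0, w + j0) \<in> ?S) \<longleftrightarrow> (\<forall>u\<in>{..<k} - A. \<forall>w\<in>B. (u, w) \<in> F)"
      using B by (simp add: bigraph_sum_high subset_eq)
    ultimately show ?thesis by blast
  qed
  moreover have "(\<forall>u\<in>(\<lambda>u. u + i0) ` A. \<forall>w\<in>{..<j0} \<union> (\<lambda>w. w + j0) ` ({..<l} - B). (u, w) \<notin> ?S)
      \<longleftrightarrow> (\<forall>u\<in>A. \<forall>w\<in>{..<l} - B. (u, w) \<notin> F)"
  proof -
    have "\<forall>u\<in>(\<lambda>u. u + i0) ` A. \<forall>w<j0. (u, w) \<notin> ?S"
      by (auto simp: bigraph_sum_cross(2))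
    moreover have "(\<forall>u\<in>A. \<forall>w\<in>{..<l} - B. (u + i0, w + j0) \<notin> ?S) \<longleftrightarrow> (\<forall>u\<in>A. \<forall>w\<in>{..<l} - B. (u, w) \<notin> F)"
      using A by (simp add: bigraph_sum_high subset_eq)
    ultimately show ?thesis by blast
  qed
  moreover have "(\<lambda>u. u + i0) ` A \<subseteq> {..<i0 + k}" "(\<lambda>w. w + j0) ` B \<subseteq> {..<j0 + l}"
    using A B by auto
  ultimately show ?thesis
    unfolding is_top_def lessThan_add_diff_image[OF A] lessThan_add_diff_image[OF B]
    using A B by (simp only: simp_thms)
qed

lemma bigraph_sum_min_top_iff:
  assumes K: "K \<subseteq> {..<k}" and L: "L \<subseteq> {..<l}"
  shows "min_top (i0 + k) (j0 + l) (bigraph_sum i0 j0 E k l F) ((\<lambda>u. u + i0) ` K) ((\<lambda>w. w + j0) ` L)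
    \<longleftrightarrow> min_top k l F K L"
proof -
  have inj: "inj (\<lambda>u::nat. u + i0)" "inj (\<lambda>w::nat. w + j0)"
    by (auto intro: injI)
  have top: "is_top (i0 + k) (j0 + l) (bigraph_sum i0 j0 E k l F) ((\<lambda>u. u + i0) ` A) ((\<lambda>w. w + j0) ` B)
      \<longleftrightarrow> is_top k l F A B" if "A \<subseteq> K" "B \<subseteq> L" for A B
    using bigraph_sum_is_top_iff that K L by (meson order_trans)
  show ?thesis
    unfolding min_top_def all_subset_image
    by (simp add: top inj_image_eq_iff[OF inj(1)] inj_image_eq_iff[OF inj(2)])
qed

lemma bigraph_sum_min_top:
  "min_top (i0 + k) (j0 + l) (bigraph_sum i0 j0 E k l F) {i0..<i0 + k} {j0..<j0 + l}
    \<longleftrightarrow> min_top k l F {..<k} {..<l}"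
  using bigraph_sum_min_top_iff[of "{..<k}" k "{..<l}" l] by (simp add: image_add_right_lessThan)

definition indecomposable :: "nat \<Rightarrow> nat \<Rightarrow> (nat \<times> nat) set \<Rightarrow> bool" where
  "indecomposable k l F \<longleftrightarrow> F \<in> bigraphs k l \<and> min_top k l F {..<k} {..<l}"

lemma indecomposable_top_whole:
  assumes "indecomposable k l F" "is_top k l F A B" "A \<noteq> {} \<or> B \<noteq> {}"
  shows "A = {..<k} \<and> B = {..<l}"
  using assms min_top_minimal is_topD(1,2) unfolding indecomposable_def by blast

lemma indecomposable_iso:
  assumes "indecomposable k l F" "(F, F') \<in> bigraph_iso k l"
  shows "indecomposable k l F'"
proof -
  obtain f g where iso: "iso_by k l f g F F'" using assms(2) bigraph_iso_iff by blast
  then have "f ` {..<k} = {..<k}" "g ` {..<l} = {..<l}" "F' \<in> bigraphs k l"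
    unfolding iso_by_def bij_betw_def by auto
  with iso_by_min_top[OF iso, of "{..<k}" "{..<l}"] assms(1) show ?thesis
    unfolding indecomposable_def by simp
qed

lemma bigraph_sum_in_min_top_class:
  assumes "indecomposable k l F"
  shows "bigraph_sum i0 j0 E k l F \<in> min_top_class (i0 + k) (j0 + l) k l"
proof -
  have "min_top (i0 + k) (j0 + l) (bigraph_sum i0 j0 E k l F) {i0..<i0 + k} {j0..<j0 + l}"
    using assms bigraph_sum_min_top unfolding indecomposable_def by blast
  moreover have "card {i0..<i0 + k} = k" "card {j0..<j0 + l} = l" by simp_all
  ultimately show ?thesis
    unfolding min_top_class_def using bigraph_sum_in_bigraphs by blast
qed

lemma bigraph_sum_split:
  assumes E: "E \<in> bigraphs (i0 + k) (j0 + l)"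
    and top: "is_top (i0 + k) (j0 + l) E {i0..<i0 + k} {j0..<j0 + l}"
  shows "E = bigraph_sum i0 j0 {(u, w) \<in> E. u < i0 \<and> w < j0} k l {(u, w). (u + i0, w + j0) \<in> E}"
proof -
  have bounds: "u < i0 + k \<and> w < j0 + l" if "(u, w) \<in> E" for u w
    using E that by (auto simp: bigraphs_iff)
  have cross: "(u, w) \<in> E" if "u < i0" "j0 \<le> w" "w < j0 + l" for u w
    using top that unfolding is_top_def by auto
  have no_cross: "(u, w) \<notin> E" if "i0 \<le> u" "u < i0 + k" "w < j0" for u w
    using top that unfolding is_top_def by auto
  let ?S = "bigraph_sum i0 j0 {(u, w) \<in> E. u < i0 \<and> w < j0} k l {(u, w). (u + i0, w + j0) \<in> E}"
  have iff: "(u, w) \<in> E \<longleftrightarrow> (u, w) \<in> ?S" if uw: "u < i0 + k" "w < j0 + l" for u w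
  proof -
    consider "u < i0" "w < j0" | "u < i0" "j0 \<le> w" | "i0 \<le> u" "w < j0" | "i0 \<le> u" "j0 \<le> w"
      by linarith
    then show ?thesis
    proof cases
      case 1
      then show ?thesis by (simp add: bigraph_sum_low)
    next
      case 2
      then show ?thesis using cross bigraph_sum_cross(1) uw by simp
    next
      case 3
      then show ?thesis using no_cross bigraph_sum_cross(2) uw by simp
    next
      case 4
      then obtain u' w' where "u = u' + i0" "w = w' + j0" "u' < k" "w' < l"
        using uw by (metis add.commute add_less_cancel_left le_add_diff_inverse2)
      then show ?thesis
        by (simp add: bigraph_sum_high)
    qed
  qed
  have S_bounds: "u < i0 + k \<and> w < j0 + l" if "(u, w) \<in> ?S" for u w
    using that bigraph_sum_in_bigraphs unfolding bigraphs_iff by blast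
  show ?thesis
  proof (rule set_eqI)
    fix x :: "nat \<times> nat"
    obtain u w where x: "x = (u, w)" by force
    show "x \<in> E \<longleftrightarrow> x \<in> ?S"
    proof (cases "u < i0 + k \<and> w < j0 + l")
      case True
      then show ?thesis using iff x by simp
    next
      case False
      then show ?thesis using bounds[of u w] S_bounds[of u w] x by blast
    qed
  qed
qed

lemma min_top_class_decomposition:
  assumes "E \<in> min_top_class (i0 + k) (j0 + l) k l"
  shows "\<exists>E0\<in>bigraphs i0 j0. \<exists>F. indecomposable k l F \<and>
    (E, bigraph_sum i0 j0 E0 k l F) \<in> bigraph_iso (i0 + k) (j0 + l)"
proof -
  obtain A B where E: "E \<in> bigraphs (i0 + k) (j0 + l)" and m: "min_top (i0 + k) (j0 + l) E A B"
    and card: "card A = k" "card B = l"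
    using assms unfolding min_top_class_def by blast
  obtain f where f: "bij_betw f {..<i0 + k} {..<i0 + k}" "f ` A = {i0..<i0 + k}"
    using ex_bij_betw_onto_upper_interval[OF min_topD(3)[OF m] card(1)] by blast
  obtain g where g: "bij_betw g {..<j0 + l} {..<j0 + l}" "g ` B = {j0..<j0 + l}"
    using ex_bij_betw_onto_upper_interval[OF min_topD(4)[OF m] card(2)] by blast
  define E' where "E' = (\<lambda>(u, w). (f u, g w)) ` E"
  have iso: "iso_by (i0 + k) (j0 + l) f g E E'"
    unfolding E'_def by (rule iso_by_image[OF f(1) g(1) E])
  then have E': "E' \<in> bigraphs (i0 + k) (j0 + l)"
    unfolding iso_by_def by blast
  have m': "min_top (i0 + k) (j0 + l) E' {i0..<i0 + k} {j0..<j0 + l}"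
    using iso_by_min_top[OF iso m] f(2) g(2) by simp
  define E0 where "E0 = {(u, w) \<in> E'. u < i0 \<and> w < j0}"
  define F0 where "F0 = {(u, w). (u + i0, w + j0) \<in> E'}"
  have sum: "E' = bigraph_sum i0 j0 E0 k l F0"
    unfolding E0_def F0_def by (rule bigraph_sum_split[OF E' min_topD(1)[OF m']])
  have E0: "E0 \<in> bigraphs i0 j0"
    using E' unfolding E0_def bigraphs_iff by auto
  have F0: "F0 \<in> bigraphs k l"
    unfolding F0_def bigraphs_iff
  proof (intro allI impI)
    fix u w assume "(u, w) \<in> {(u, w). (u + i0, w + j0) \<in> E'}"
    with E' have "u + i0 < i0 + k \<and> w + j0 < j0 + l" unfolding bigraphs_iff by blast
    then show "u < k \<and> w < l" by simp
  qed
  have "indecomposable k l F0"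
    using m' bigraph_sum_min_top F0 unfolding sum indecomposable_def by blast
  moreover have "(E, bigraph_sum i0 j0 E0 k l F0) \<in> bigraph_iso (i0 + k) (j0 + l)"
    using iso sum bigraph_iso_iff by blast
  ultimately show ?thesis using E0 by blast
qed

lemma iso_by_bigraph_sum:
  assumes iso1: "iso_by i0 j0 f1 g1 E E'" and iso2: "iso_by k l f2 g2 F F'"
  shows "iso_by (i0 + k) (j0 + l) (\<lambda>u. if u < i0 then f1 u else f2 (u - i0) + i0)
    (\<lambda>w. if w < j0 then g1 w else g2 (w - j0) + j0) (bigraph_sum i0 j0 E k l F) (bigraph_sum i0 j0 E' k l F')"
proof -
  from iso1 iso2 have f1: "bij_betw f1 {..<i0} {..<i0}" and g1: "bij_betw g1 {..<j0} {..<j0}"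
    and f2: "bij_betw f2 {..<k} {..<k}" and g2: "bij_betw g2 {..<l} {..<l}"
    unfolding iso_by_def by auto
  have "((if u < i0 then f1 u else f2 (u - i0) + i0), (if w < j0 then g1 w else g2 (w - j0) + j0))
      \<in> bigraph_sum i0 j0 E' k l F' \<longleftrightarrow> (u, w) \<in> bigraph_sum i0 j0 E k l F"
    if "u < i0 + k" "w < j0 + l" for u w
  proof -
    have "f1 u < i0" if "u < i0" for u using that bij_betwE[OF f1] by auto
    moreover have "g1 w < j0" if "w < j0" for w using that bij_betwE[OF g1] by auto
    moreover have "f2 u < k" if "u < k" for u using that bij_betwE[OF f2] by auto
    moreover have "g2 w < l" if "w < l" for w using that bij_betwE[OF g2] by auto
    ultimately show ?thesis
      using that iso1 iso2 unfolding iso_by_def bigraph_sum_def by (auto simp: trans_less_add1) (meson leD)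
  qed
  then show ?thesis
    using bij_betw_lessThan_add_combine[OF f1 f2] bij_betw_lessThan_add_combine[OF g1 g2] bigraph_sum_in_bigraphs
    unfolding iso_by_def by blast
qed

lemma iso_by_bigraph_sum_parts:
  assumes iso: "iso_by (i0 + k) (j0 + l) f g (bigraph_sum i0 j0 E k l F) (bigraph_sum i0 j0 E' k l F')"
    and E: "E \<in> bigraphs i0 j0" "E' \<in> bigraphs i0 j0" and F: "F \<in> bigraphs k l" "F' \<in> bigraphs k l"
    and f: "f ` {i0..<i0 + k} = {i0..<i0 + k}" and g: "g ` {j0..<j0 + l} = {j0..<j0 + l}"
  shows "iso_by i0 j0 f g E E'" "iso_by k l (\<lambda>u. f (u + i0) - i0) (\<lambda>w. g (w + j0) - j0) F F'"
proof -
  from iso have fb: "bij_betw f {..<i0 + k} {..<i0 + k}" and gb: "bij_betw g {..<j0 + l} {..<j0 + l}"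
    and edge: "\<And>u w. u < i0 + k \<Longrightarrow> w < j0 + l \<Longrightarrow>
      (f u, g w) \<in> bigraph_sum i0 j0 E' k l F' \<longleftrightarrow> (u, w) \<in> bigraph_sum i0 j0 E k l F"
    unfolding iso_by_def by auto
  note f_low = bij_betw_lessThan_add_parts(1)[OF fb f] and g_low = bij_betw_lessThan_add_parts(1)[OF gb g]
  have "(f u, g w) \<in> E' \<longleftrightarrow> (u, w) \<in> E" if "u < i0" "w < j0" for u w
    using edge[of u w] that bij_betwE[OF f_low] bij_betwE[OF g_low] by (simp add: bigraph_sum_low)
  then show "iso_by i0 j0 f g E E'"
    using f_low g_low E unfolding iso_by_def by blast
  have f_high: "f (u + i0) = (f (u + i0) - i0) + i0" if "u < k" for u
  proof -
    have "f (u + i0) \<in> f ` {i0..<i0 + k}" using that by simp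
    then show ?thesis unfolding f by simp
  qed
  have g_high: "g (w + j0) = (g (w + j0) - j0) + j0" if "w < l" for w
  proof -
    have "g (w + j0) \<in> g ` {j0..<j0 + l}" using that by simp
    then show ?thesis unfolding g by simp
  qed
  have "(f (u + i0) - i0, g (w + j0) - j0) \<in> F' \<longleftrightarrow> (u, w) \<in> F" if "u < k" "w < l" for u w
  proof -
    have "f (u + i0) - i0 < k" "g (w + j0) - j0 < l"
      using that bij_betwE[OF bij_betw_lessThan_add_parts(2)[OF fb f]] bij_betwE[OF bij_betw_lessThan_add_parts(2)[OF gb g]]
      by auto
    from bigraph_sum_high[OF this, of i0 j0 E']
    have "(f (u + i0), g (w + j0)) \<in> bigraph_sum i0 j0 E' k l F' \<longleftrightarrow> (f (u + i0) - i0, g (w + j0) - j0) \<in> F'"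
      by (simp only: f_high[OF that(1), symmetric] g_high[OF that(2), symmetric])
    with edge[of "u + i0" "w + j0"] that show ?thesis by (simp add: bigraph_sum_high)
  qed
  then show "iso_by k l (\<lambda>u. f (u + i0) - i0) (\<lambda>w. g (w + j0) - j0) F F'"
    using bij_betw_lessThan_add_parts(2)[OF fb f] bij_betw_lessThan_add_parts(2)[OF gb g] F
    unfolding iso_by_def by blast
qed

text \<open>The minimal top of a sum with an indecomposable upper part is that part, unless it is a
  single vertex; an isomorphism may then move it to a twin vertex, which a transposition undoes.\<close>
lemma bigraph_sum_iso_reflect:
  assumes F: "indecomposable k l F" "indecomposable k l F'"
    and E: "E \<in> bigraphs i0 j0" "E' \<in> bigraphs i0 j0"
    and iso: "(bigraph_sum i0 j0 E k l F, bigraph_sum i0 j0 E' k l F') \<in> bigraph_iso (i0 + k) (j0 + l)"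
  shows "(E, E') \<in> bigraph_iso i0 j0 \<and> (F, F') \<in> bigraph_iso k l"
proof -
  let ?S = "bigraph_sum i0 j0 E k l F" and ?S' = "bigraph_sum i0 j0 E' k l F'"
  let ?R1 = "{i0..<i0 + k}" and ?R2 = "{j0..<j0 + l}"
  obtain f g where fg: "iso_by (i0 + k) (j0 + l) f g ?S ?S'"
    using iso bigraph_iso_iff by blast
  have m: "min_top (i0 + k) (j0 + l) ?S ?R1 ?R2" and m': "min_top (i0 + k) (j0 + l) ?S' ?R1 ?R2"
    using F bigraph_sum_min_top unfolding indecomposable_def by blast+
  have m_img: "min_top (i0 + k) (j0 + l) ?S' (f ` ?R1) (g ` ?R2)"
    by (rule iso_by_min_top[OF fg m])
  have "\<exists>f g. iso_by (i0 + k) (j0 + l) f g ?S ?S' \<and> f ` ?R1 = ?R1 \<and> g ` ?R2 = ?R2"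
  proof (cases "?R1 = f ` ?R1 \<and> ?R2 = g ` ?R2")
    case True
    with fg show ?thesis by metis
  next
    case False
    note top' = min_topD(1)[OF m'] and top_img = min_topD(1)[OF m_img]
    consider u v where "?R1 = {u}" "f ` ?R1 = {v}" "?R2 = {}" "g ` ?R2 = {}"
      | w w' where "?R2 = {w}" "g ` ?R2 = {w'}" "?R1 = {}" "f ` ?R1 = {}"
      using min_tops_eq_or_singletons[OF m' m_img False] by blast
    then show ?thesis
    proof cases
      case 1
      have "u < i0 + k" "v < i0 + k"
        using min_topD(3)[OF m'] min_topD(3)[OF m_img] 1 by auto
      moreover have "nbhd1 ?S' v = nbhd1 ?S' u"
        using is_top_singleton_nbhd(1)[OF bigraph_sum_in_bigraphs] top' top_img 1 by metis
      ultimately have "iso_by (i0 + k) (j0 + l) (id(v := u, u := v) \<circ> f) (id \<circ> g) ?S ?S'"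
        using iso_by_trans[OF fg iso_by_swap_twins1[OF bigraph_sum_in_bigraphs]] by blast
      moreover have "(id(v := u, u := v) \<circ> f) ` ?R1 = ?R1" "(id \<circ> g) ` ?R2 = ?R2"
        unfolding image_comp[symmetric] 1(2,4) using 1(1,3) by auto
      ultimately show ?thesis by blast
    next
      case 2
      have "w < j0 + l" "w' < j0 + l"
        using min_topD(4)[OF m'] min_topD(4)[OF m_img] 2 by auto
      moreover have "nbhd2 ?S' w' = nbhd2 ?S' w"
        using is_top_singleton_nbhd(2)[OF bigraph_sum_in_bigraphs] top' top_img 2 by metis
      ultimately have "iso_by (i0 + k) (j0 + l) (id \<circ> f) (id(w' := w, w := w') \<circ> g) ?S ?S'"
        using iso_by_trans[OF fg iso_by_swap_twins2[OF bigraph_sum_in_bigraphs]] by blast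
      moreover have "(id \<circ> f) ` ?R1 = ?R1" "(id(w' := w, w := w') \<circ> g) ` ?R2 = ?R2"
        unfolding image_comp[symmetric] 2(2,4) using 2(1,3) by auto
      ultimately show ?thesis by blast
    qed
  qed
  then obtain f' g' where "iso_by (i0 + k) (j0 + l) f' g' ?S ?S'" "f' ` ?R1 = ?R1" "g' ` ?R2 = ?R2"
    by blast
  from iso_by_bigraph_sum_parts[OF this(1) E _ _ this(2,3)] F show ?thesis
    unfolding bigraph_iso_iff indecomposable_def by blast
qed

lemma bigraph_sum_iso_iff:
  assumes "indecomposable k l F" "indecomposable k l F'" "E \<in> bigraphs i0 j0" "E' \<in> bigraphs i0 j0"
  shows "(bigraph_sum i0 j0 E k l F, bigraph_sum i0 j0 E' k l F') \<in> bigraph_iso (i0 + k) (j0 + l)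
    \<longleftrightarrow> (E, E') \<in> bigraph_iso i0 j0 \<and> (F, F') \<in> bigraph_iso k l"
proof
  assume "(E, E') \<in> bigraph_iso i0 j0 \<and> (F, F') \<in> bigraph_iso k l"
  then obtain f1 g1 f2 g2 where "iso_by i0 j0 f1 g1 E E'" "iso_by k l f2 g2 F F'"
    using bigraph_iso_iff by blast
  from iso_by_bigraph_sum[OF this]
  show "(bigraph_sum i0 j0 E k l F, bigraph_sum i0 j0 E' k l F') \<in> bigraph_iso (i0 + k) (j0 + l)"
    using bigraph_iso_iff by blast
qed (use assms bigraph_sum_iso_reflect in blast)

section \<open>Counting isomorphism classes\<close>

lemma card_image_eq_if_same_kernel:
  assumes "\<And>x y. x \<in> S \<Longrightarrow> y \<in> S \<Longrightarrow> p x = p y \<longleftrightarrow> q x = q y"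
  shows "card (p ` S) = card (q ` S)"
proof -
  define h where "h z = p (inv_into S q z)" for z
  have h: "h (q x) = p x" if "x \<in> S" for x
    using assms[of "inv_into S q (q x)" x] that inv_into_into[of "q x" q S] f_inv_into_f[of "q x" q S]
    unfolding h_def by auto
  then have "p ` S = h ` q ` S" by (auto simp: image_image)
  moreover have "inj_on h (q ` S)"
    by (rule inj_onI) (use h assms in fastforce)
  ultimately show ?thesis by (simp add: card_image)
qed

lemma card_quotient_product:
  assumes eA: "equiv A RA" and eB: "equiv B RB" and eD: "equiv D RC" and CD: "C \<subseteq> D"
    and into: "\<And>a b. a \<in> A \<Longrightarrow> b \<in> B \<Longrightarrow> \<Phi> a b \<in> C"
    and iff: "\<And>a a' b b'. a \<in> A \<Longrightarrow> a' \<in> A \<Longrightarrow> b \<in> B \<Longrightarrow> b' \<in> B \<Longrightarrow>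
       (\<Phi> a b, \<Phi> a' b') \<in> RC \<longleftrightarrow> (a, a') \<in> RA \<and> (b, b') \<in> RB"
    and surj: "\<And>c. c \<in> C \<Longrightarrow> \<exists>a\<in>A. \<exists>b\<in>B. (c, \<Phi> a b) \<in> RC"
  shows "card (C // RC) = card (A // RA) * card (B // RB)"
proof -
  define p where "p = (\<lambda>(a, b). RC `` {\<Phi> a b})"
  define q where "q = (\<lambda>(a, b). (RA `` {a}, RB `` {b}))"
  have "p x = p y \<longleftrightarrow> q x = q y" if xy_in: "x \<in> A \<times> B" "y \<in> A \<times> B" for x y
  proof -
    obtain a b a' b' where xy: "x = (a, b)" "y = (a', b')" and ab: "a \<in> A" "b \<in> B" "a' \<in> A" "b' \<in> B"
      using xy_in by force
    have "p x = p y \<longleftrightarrow> (\<Phi> a b, \<Phi> a' b') \<in> RC"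
      using equiv_class_eq_iff[OF eD] into[OF ab(1,2)] into[OF ab(3,4)] CD xy unfolding p_def by auto
    also have "\<dots> \<longleftrightarrow> (a, a') \<in> RA \<and> (b, b') \<in> RB" using iff ab by blast
    also have "\<dots> \<longleftrightarrow> q x = q y"
      using equiv_class_eq_iff[OF eA] equiv_class_eq_iff[OF eB] ab xy unfolding q_def by auto
    finally show ?thesis .
  qed
  then have "card (p ` (A \<times> B)) = card (q ` (A \<times> B))"
    by (rule card_image_eq_if_same_kernel)
  moreover have "q ` (A \<times> B) = (A // RA) \<times> (B // RB)"
    unfolding q_def quotient_def by auto
  moreover have "p ` (A \<times> B) = C // RC"
  proof (intro set_eqI iffI)
    fix X assume "X \<in> p ` (A \<times> B)"
    then show "X \<in> C // RC" using into unfolding p_def by (auto intro: quotientI)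
  next
    fix X assume "X \<in> C // RC"
    then obtain c where c: "c \<in> C" "X = RC `` {c}" by (auto elim: quotientE)
    then obtain a b where ab: "a \<in> A" "b \<in> B" "(c, \<Phi> a b) \<in> RC" using surj by blast
    then have "RC `` {c} = RC `` {\<Phi> a b}" using equiv_class_eq_iff[OF eD] by blast
    then show "X \<in> p ` (A \<times> B)" using c ab unfolding p_def by force
  qed
  ultimately show ?thesis by (simp add: card_cartesian_product)
qed

lemma quotient_Int_closed:
  assumes "\<And>x y. x \<in> S \<Longrightarrow> (x, y) \<in> R \<Longrightarrow> y \<in> S"
  shows "S // (R \<inter> S \<times> S) = S // R"
proof -
  have "(R \<inter> S \<times> S) `` {x} = R `` {x}" if "x \<in> S" for x using assms that by auto
  then show ?thesis unfolding quotient_def by auto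
qed

definition icount :: "nat \<Rightarrow> nat \<Rightarrow> nat" where
  "icount k l = card ({F. indecomposable k l F} // bigraph_iso k l)"

lemma card_min_top_class_quotient:
  "card (min_top_class (i0 + k) (j0 + l) k l // bigraph_iso (i0 + k) (j0 + l)) = bcount i0 j0 * icount k l"
proof -
  let ?I = "{F. indecomposable k l F}"
  let ?RI = "bigraph_iso k l \<inter> ?I \<times> ?I"
  have indec_bigraphs: "?I \<subseteq> bigraphs k l"
    unfolding indecomposable_def by auto
  have eI: "equiv ?I ?RI"
    using equiv_bigraph_iso[of k l] indec_bigraphs unfolding equiv_def refl_on_def sym_def trans_def by blast
  have "card (min_top_class (i0 + k) (j0 + l) k l // bigraph_iso (i0 + k) (j0 + l))
      = card (bigraphs i0 j0 // bigraph_iso i0 j0) * card (?I // ?RI)"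
  proof (rule card_quotient_product[OF equiv_bigraph_iso eI equiv_bigraph_iso, where \<Phi> = "\<lambda>E F. bigraph_sum i0 j0 E k l F"])
    show "min_top_class (i0 + k) (j0 + l) k l \<subseteq> bigraphs (i0 + k) (j0 + l)"
      unfolding min_top_class_def by auto
    show "bigraph_sum i0 j0 E k l F \<in> min_top_class (i0 + k) (j0 + l) k l" if "F \<in> ?I" for E F
      using that bigraph_sum_in_min_top_class by blast
    show "(bigraph_sum i0 j0 E k l F, bigraph_sum i0 j0 E' k l F') \<in> bigraph_iso (i0 + k) (j0 + l)
        \<longleftrightarrow> (E, E') \<in> bigraph_iso i0 j0 \<and> (F, F') \<in> ?RI"
      if "E \<in> bigraphs i0 j0" "E' \<in> bigraphs i0 j0" "F \<in> ?I" "F' \<in> ?I" for E E' F F'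
      using that bigraph_sum_iso_iff by auto
    show "\<exists>E\<in>bigraphs i0 j0. \<exists>F\<in>?I. (C, bigraph_sum i0 j0 E k l F) \<in> bigraph_iso (i0 + k) (j0 + l)"
      if "C \<in> min_top_class (i0 + k) (j0 + l) k l" for C
      using min_top_class_decomposition[OF that] by blast
  qed
  moreover have "?I // ?RI = ?I // bigraph_iso k l"
    by (rule quotient_Int_closed) (use indecomposable_iso in blast)
  ultimately show ?thesis unfolding bcount_def icount_def by simp
qed

lemma quotient_bigraphs_eq_UN_min_top_class:
  assumes "(i, j) \<noteq> (0, 0)"
  shows "bigraphs i j // bigraph_iso i j =
    (\<Union>(a, b)\<in>{..i} \<times> {..j}. min_top_class i j (i - a) (j - b) // bigraph_iso i j)"
proof (intro equalityI subsetI)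
  fix X assume "X \<in> bigraphs i j // bigraph_iso i j"
  then obtain E where E: "E \<in> bigraphs i j" "X = bigraph_iso i j `` {E}" by (auto elim: quotientE)
  obtain A B where m: "min_top i j E A B" using min_top_exists[OF assms] by blast
  have "card A \<le> i" "card B \<le> j"
    using card_mono[OF _ min_topD(3)[OF m]] card_mono[OF _ min_topD(4)[OF m]] by auto
  then have "E \<in> min_top_class i j (i - (i - card A)) (j - (j - card B))"
    using E m unfolding min_top_class_def by auto
  with E(2) show "X \<in> (\<Union>(a, b)\<in>{..i} \<times> {..j}. min_top_class i j (i - a) (j - b) // bigraph_iso i j)"
    by (force intro: quotientI)
next
  fix X assume "X \<in> (\<Union>(a, b)\<in>{..i} \<times> {..j}. min_top_class i j (i - a) (j - b) // bigraph_iso i j)"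
  then show "X \<in> bigraphs i j // bigraph_iso i j"
    unfolding quotient_def min_top_class_def by blast
qed

lemma min_top_class_quotients_disjoint:
  assumes "(k, l) \<noteq> (k', l')"
  shows "(min_top_class i j k l // bigraph_iso i j) \<inter> (min_top_class i j k' l' // bigraph_iso i j) = {}"
proof (rule ccontr)
  assume "\<not> ?thesis"
  then obtain E E' where E: "E \<in> min_top_class i j k l" "E' \<in> min_top_class i j k' l'"
    and "bigraph_iso i j `` {E} = bigraph_iso i j `` {E'}"
    by (auto elim!: quotientE)
  then have "(E, E') \<in> bigraph_iso i j"
    using equiv_class_eq_iff[OF equiv_bigraph_iso] unfolding min_top_class_def by blast
  with E have "k = k' \<and> l = l'"
    using min_top_class_iso min_top_class_unique by blast
  with assms show False by blast
qed

lemma bcount_recurrence: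
  assumes "(i, j) \<noteq> (0, 0)"
  shows "bcount i j = (\<Sum>a\<le>i. \<Sum>b\<le>j. bcount a b * icount (i - a) (j - b))"
proof -
  let ?Q = "\<lambda>(a, b). min_top_class i j (i - a) (j - b) // bigraph_iso i j"
  have "finite (?Q p)" for p
  proof -
    have "finite (bigraphs i j // bigraph_iso i j)"
      using equiv_bigraph_iso[of i j] by (intro finite_quotient[OF finite_bigraphs]) (simp add: equiv_def)
    moreover have "?Q p \<subseteq> bigraphs i j // bigraph_iso i j"
      unfolding quotient_def min_top_class_def by (auto simp: split_beta)
    ultimately show ?thesis by (rule finite_subset[rotated])
  qed
  moreover have "?Q p \<inter> ?Q q = {}" if "p \<in> {..i} \<times> {..j}" "q \<in> {..i} \<times> {..j}" "p \<noteq> q" for p q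
  proof -
    obtain a b a' b' where pq: "p = (a, b)" "q = (a', b')" by force
    with that have "(i - a, j - b) \<noteq> (i - a', j - b')" by auto
    then show ?thesis using min_top_class_quotients_disjoint pq by simp
  qed
  ultimately have "bcount i j = (\<Sum>p\<in>{..i} \<times> {..j}. card (?Q p))"
    unfolding bcount_def quotient_bigraphs_eq_UN_min_top_class[OF assms] by (simp add: card_UN_disjoint)
  also have "\<dots> = (\<Sum>a\<le>i. \<Sum>b\<le>j. card (min_top_class i j (i - a) (j - b) // bigraph_iso i j))"
    by (simp add: sum.cartesian_product prod.case_distrib)
  also have "\<dots> = (\<Sum>a\<le>i. \<Sum>b\<le>j. bcount a b * icount (i - a) (j - b))"
  proof (intro sum.cong refl)
    fix a b assume "a \<in> {..i}" "b \<in> {..j}"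
    then show "card (min_top_class i j (i - a) (j - b) // bigraph_iso i j) = bcount a b * icount (i - a) (j - b)"
      using card_min_top_class_quotient[of a "i - a" b "j - b"] by simp
  qed
  finally show ?thesis .
qed

section \<open>Indecomposable graphs are tangles or single vertices\<close>

lemma connected_on_closed:
  assumes "connected_on S R" "T \<subseteq> S" "\<And>x y. (x, y) \<in> R \<Longrightarrow> x \<in> T \<Longrightarrow> y \<in> T"
  shows "T = {} \<or> T = S"
proof (rule ccontr)
  assume "\<not> (T = {} \<or> T = S)"
  then obtain a b where a: "a \<in> T" and b: "b \<in> S" "b \<notin> T" using assms(2) by blast
  then have "(a, b) \<in> R\<^sup>*" using assms(1,2) unfolding connected_on_def by blast
  then have "b \<in> T" using a by (induction rule: rtrancl_induct) (auto intro: assms(3))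
  with b show False by blast
qed

text \<open>Every vertex of the component of \<open>a\<close> is comparable with \<open>y\<close>, so the truth value of
  \<open>N x \<subseteq> N y\<close> cannot change along an edge of that component.\<close>
lemma incomp_component_dichotomy:
  assumes a: "a \<in> S" and y: "y \<in> S" "(a, y) \<notin> (incomp_graph S N)\<^sup>*"
  shows "(\<forall>x. (a, x) \<in> (incomp_graph S N)\<^sup>* \<longrightarrow> N x \<subseteq> N y) \<or>
         (\<forall>x. (a, x) \<in> (incomp_graph S N)\<^sup>* \<longrightarrow> N y \<subseteq> N x)"
proof -
  let ?R = "incomp_graph S N"
  have comparable: "N x \<subseteq> N y \<or> N y \<subseteq> N x" if "(a, x) \<in> ?R\<^sup>*" "x \<in> S" for x
  proof (rule ccontr)
    assume "\<not> (N x \<subseteq> N y \<or> N y \<subseteq> N x)"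
    with that(2) y(1) have "(x, y) \<in> ?R" unfolding incomp_graph_def by simp
    with that(1) y(2) show False by (meson rtrancl_into_rtrancl)
  qed
  have in_S: "x \<in> S" if "(a, x) \<in> ?R\<^sup>*" for x
    using that a by (induction rule: rtrancl_induct) (auto simp: incomp_graph_def)
  have invariant: "N x \<subseteq> N y \<longleftrightarrow> N a \<subseteq> N y" if "(a, x) \<in> ?R\<^sup>*" for x
    using that
  proof (induction rule: rtrancl_induct)
    case (step x z)
    then have "x \<in> S" "z \<in> S" "\<not> N x \<subseteq> N z" "\<not> N z \<subseteq> N x"
      unfolding incomp_graph_def by auto
    moreover have "(a, z) \<in> ?R\<^sup>*" using step(1,2) by (rule rtrancl_into_rtrancl)
    ultimately show ?case
      using step(1,3) comparable[of x] comparable[of z] by (meson subset_trans)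
  qed simp
  show ?thesis
  proof (cases "N a \<subseteq> N y")
    case True
    with invariant show ?thesis by blast
  next
    case False
    have "N y \<subseteq> N x" if "(a, x) \<in> ?R\<^sup>*" for x
      using comparable[OF that in_S[OF that]] invariant[OF that] False by blast
    then show ?thesis by blast
  qed
qed

lemma incomp_graph_disconnected_split:
  assumes "\<not> connected_on S (incomp_graph S N)"
  shows "\<exists>Q\<subseteq>S. Q \<noteq> {} \<and> Q \<noteq> S \<and> (\<forall>p\<in>S - Q. \<forall>q\<in>Q. N p \<subseteq> N q)"
proof -
  let ?R = "incomp_graph S N"
  obtain a b where ab: "a \<in> S" "b \<in> S" "(a, b) \<notin> ?R\<^sup>*"
    using assms unfolding connected_on_def by blast
  define K where "K = {x. (a, x) \<in> ?R\<^sup>*}"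
  define U where "U = {y \<in> S - K. \<forall>x\<in>K. N x \<subseteq> N y}"
  define L where "L = S - K - U"
  have K: "a \<in> K" "b \<notin> K" "K \<subseteq> S"
  proof -
    have "x \<in> S" if "(a, x) \<in> ?R\<^sup>*" for x
      using that ab(1) by (induction rule: rtrancl_induct) (auto simp: incomp_graph_def)
    then show "a \<in> K" "b \<notin> K" "K \<subseteq> S" using ab unfolding K_def by auto
  qed
  have below: "N y \<subseteq> N x" if "y \<in> L" "x \<in> K" for x y
    using that incomp_component_dichotomy[OF ab(1), of y N] unfolding L_def U_def K_def by blast
  show ?thesis
  proof (cases "L = {}")
    case True
    then have "U = S - K" unfolding L_def U_def by blast
    with K have "U \<subseteq> S \<and> U \<noteq> {} \<and> U \<noteq> S \<and> (\<forall>p\<in>S - U. \<forall>q\<in>U. N p \<subseteq> N q)"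
      using ab(2) unfolding U_def by auto
    then show ?thesis by blast
  next
    case False
    have "N p \<subseteq> N q" if "p \<in> S - (K \<union> U)" "q \<in> K \<union> U" for p q
    proof -
      have p: "p \<in> L" using that(1) unfolding L_def by blast
      show ?thesis
      proof (cases "q \<in> K")
        case False
        with that(2) have "N a \<subseteq> N q" using K(1) unfolding U_def by blast
        with below[OF p K(1)] show ?thesis by blast
      qed (use below p in blast)
    qed
    moreover have "K \<union> U \<subseteq> S" "K \<union> U \<noteq> {}" "K \<union> U \<noteq> S"
      using K False unfolding U_def L_def by auto
    ultimately show ?thesis by blast
  qed
qed

lemma incomp_graph_const_not_connected:
  assumes "\<forall>a\<in>S. \<forall>b\<in>S. N a = N b" "x \<in> S" "y \<in> S" "x \<noteq> y"
  shows "\<not> connected_on S (incomp_graph S N)"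
proof -
  have "incomp_graph S N = {}" unfolding incomp_graph_def using assms(1) by blast
  with assms(2-4) show ?thesis unfolding connected_on_def by auto
qed

lemma is_top_nbhd2_subset:
  assumes "E \<in> bigraphs i j" "is_top i j E A B" "a \<in> B" "b < j" "b \<notin> B"
  shows "nbhd2 E b \<subseteq> nbhd2 E a"
proof
  fix u assume "u \<in> nbhd2 E b"
  then have "(u, b) \<in> E" unfolding nbhd2_def by simp
  with assms have "u < i" "u \<notin> A" using is_topD(4)[OF assms(2)] unfolding bigraphs_iff by blast+
  with is_topD(3)[OF assms(2)] assms(3) show "u \<in> nbhd2 E a" unfolding nbhd2_def by blast
qed

lemma is_top_nbhd1_subset:
  assumes "E \<in> bigraphs i j" "is_top i j E A B" "a \<in> A" "b < i" "b \<notin> A"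
  shows "nbhd1 E a \<subseteq> nbhd1 E b"
proof
  fix w assume "w \<in> nbhd1 E a"
  then have "(a, w) \<in> E" unfolding nbhd1_def by simp
  with assms have "w < j" "w \<in> B" using is_topD(4)[OF assms(2)] unfolding bigraphs_iff by blast+
  with is_topD(3)[OF assms(2)] assms(4,5) show "w \<in> nbhd1 E b" unfolding nbhd1_def by blast
qed

text \<open>In a tangle both sides of a top are closed under incomparability, hence trivial.\<close>
lemma tangle_top_trivial:
  assumes t: "is_tangle k l F" and top: "is_top k l F A B"
  shows "(A = {} \<or> A = {..<k}) \<and> (B = {} \<or> B = {..<l})"
proof -
  from t have F: "F \<in> bigraphs k l"
    and c1: "connected_on {..<k} (incomp_graph {..<k} (nbhd1 F))"
    and c2: "connected_on {..<l} (incomp_graph {..<l} (nbhd2 F))"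
    unfolding is_tangle_def by auto
  have "A = {} \<or> A = {..<k}"
  proof (rule connected_on_closed[OF c1])
    show "A \<subseteq> {..<k}" using is_topD(1)[OF top] .
    show "y \<in> A" if "(x, y) \<in> incomp_graph {..<k} (nbhd1 F)" "x \<in> A" for x y
      using that is_top_nbhd1_subset[OF F top, of x y] unfolding incomp_graph_def by auto
  qed
  moreover have "B = {} \<or> B = {..<l}"
  proof (rule connected_on_closed[OF c2])
    show "B \<subseteq> {..<l}" using is_topD(2)[OF top] .
    show "y \<in> B" if "(x, y) \<in> incomp_graph {..<l} (nbhd2 F)" "x \<in> B" for x y
      using that is_top_nbhd2_subset[OF F top, of x y] unfolding incomp_graph_def by auto
  qed
  ultimately show ?thesis by blast
qed

lemma tangle_imp_indecomposable:
  assumes t: "is_tangle k l F"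
  shows "indecomposable k l F"
proof -
  from t have F: "F \<in> bigraphs k l" and kl: "k \<ge> 2" "l \<ge> 2"
    and c2: "connected_on {..<l} (incomp_graph {..<l} (nbhd2 F))"
    unfolding is_tangle_def by auto
  have "A = {..<k} \<and> B = {..<l}" if top: "is_top k l F A B" and ne: "A \<noteq> {} \<or> B \<noteq> {}" for A B
  proof (rule ccontr)
    assume "\<not> (A = {..<k} \<and> B = {..<l})"
    with tangle_top_trivial[OF t top] ne
    have "(A = {} \<and> B = {..<l}) \<or> (A = {..<k} \<and> B = {})" by blast
    then have "\<forall>a\<in>{..<l}. nbhd2 F a = {..<k} - A"
    proof (elim disjE conjE)
      assume "A = {}" "B = {..<l}"
      with is_topD(3)[OF top] have "(u, a) \<in> F" if "u < k" "a < l" for u a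
        using that by blast
      with F show ?thesis
        using \<open>A = {}\<close> unfolding nbhd2_def bigraphs_iff by blast
    next
      assume "A = {..<k}" "B = {}"
      with is_topD(4)[OF top] have "(u, a) \<notin> F" if "u < k" "a < l" for u a
        using that by blast
      with F show ?thesis
        using \<open>A = {..<k}\<close> unfolding nbhd2_def bigraphs_iff by blast
    qed
    then have "\<not> connected_on {..<l} (incomp_graph {..<l} (nbhd2 F))"
      using kl by (intro incomp_graph_const_not_connected[of _ _ 0 1]) auto
    with c2 show False by blast
  qed
  moreover have "is_top k l F {..<k} {..<l}"
    unfolding is_top_def by auto
  moreover have "{..<k} \<noteq> {} \<or> {..<l} \<noteq> {}"
    using kl by (metis lessThan_iff emptyE zero_less_numeral less_le_trans)
  ultimately have "min_top k l F {..<k} {..<l}"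
    by (blast intro: min_topI)
  with F show ?thesis unfolding indecomposable_def by blast
qed

lemma is_top_of_nbhd2_split:
  assumes Q: "Q \<subseteq> {..<l}" "\<forall>p\<in>{..<l} - Q. \<forall>q\<in>Q. nbhd2 F p \<subseteq> nbhd2 F q"
  shows "is_top k l F ({..<k} - (\<Union>p\<in>{..<l} - Q. nbhd2 F p)) Q"
  unfolding is_top_def
proof (intro conjI ballI)
  fix u w assume "u \<in> {..<k} - ({..<k} - (\<Union>p\<in>{..<l} - Q. nbhd2 F p))" "w \<in> Q"
  with Q(2) show "(u, w) \<in> F" unfolding nbhd2_def by blast
next
  fix u w assume "u \<in> {..<k} - (\<Union>p\<in>{..<l} - Q. nbhd2 F p)" "w \<in> {..<l} - Q"
  then show "(u, w) \<notin> F" unfolding nbhd2_def by blast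
qed (use Q(1) in auto)

lemma is_top_of_nbhd1_split:
  assumes Q: "Q \<subseteq> {..<k}" "\<forall>p\<in>{..<k} - Q. \<forall>q\<in>Q. nbhd1 F p \<subseteq> nbhd1 F q"
  shows "is_top k l F ({..<k} - Q) ({..<l} \<inter> (\<Union>p\<in>{..<k} - Q. nbhd1 F p))"
  unfolding is_top_def
proof (intro conjI ballI)
  fix u w assume "u \<in> {..<k} - ({..<k} - Q)" "w \<in> {..<l} \<inter> (\<Union>p\<in>{..<k} - Q. nbhd1 F p)"
  with Q(2) show "(u, w) \<in> F" unfolding nbhd1_def by blast
next
  fix u w assume "u \<in> {..<k} - Q" "w \<in> {..<l} - {..<l} \<inter> (\<Union>p\<in>{..<k} - Q. nbhd1 F p)"
  then show "(u, w) \<notin> F" unfolding nbhd1_def by blast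
qed auto

text \<open>A disconnected incomparability graph would yield a nonempty proper top.\<close>
lemma indecomposable_imp_tangle:
  assumes I: "indecomposable k l F" and kl: "k \<ge> 2" "l \<ge> 2"
  shows "is_tangle k l F"
proof -
  have "connected_on {..<l} (incomp_graph {..<l} (nbhd2 F))"
  proof (rule ccontr)
    assume "\<not> ?thesis"
    from incomp_graph_disconnected_split[OF this] obtain Q where Q: "Q \<subseteq> {..<l}" "Q \<noteq> {}" "Q \<noteq> {..<l}"
      and QN: "\<forall>p\<in>{..<l} - Q. \<forall>q\<in>Q. nbhd2 F p \<subseteq> nbhd2 F q" by blast
    from indecomposable_top_whole[OF I is_top_of_nbhd2_split[OF Q(1) QN]] Q(2,3) show False by blast
  qed
  moreover have "connected_on {..<k} (incomp_graph {..<k} (nbhd1 F))"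
  proof (rule ccontr)
    assume "\<not> ?thesis"
    from incomp_graph_disconnected_split[OF this] obtain Q where Q: "Q \<subseteq> {..<k}" "Q \<noteq> {}" "Q \<noteq> {..<k}"
      and QN: "\<forall>p\<in>{..<k} - Q. \<forall>q\<in>Q. nbhd1 F p \<subseteq> nbhd1 F q" by blast
    have "{..<k} - Q \<noteq> {}" using Q(1,3) by blast
    from indecomposable_top_whole[OF I is_top_of_nbhd1_split[OF Q(1) QN]] this Q(1,2) show False by blast
  qed
  ultimately show ?thesis
    using I kl unfolding is_tangle_def indecomposable_def by blast
qed

lemma indecomposable_size:
  assumes I: "indecomposable k l F"
  shows "(k = 1 \<and> l = 0) \<or> (k = 0 \<and> l = 1) \<or> (k \<ge> 2 \<and> l \<ge> 2)"
proof -
  have ne: "k \<noteq> 0 \<or> l \<noteq> 0"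
    using min_topD(2) I unfolding indecomposable_def by fastforce
  have full: "k = 0 \<and> l = 1" if "w < l" "\<forall>u<k. (u, w) \<in> F" for w
  proof -
    from that have "is_top k l F {} {w}" unfolding is_top_def by auto
    with indecomposable_top_whole[OF I] have "{} = {..<k}" and w: "{w} = {..<l}" by auto
    moreover have "l = card {w}" by (simp only: w card_lessThan)
    ultimately show ?thesis by auto
  qed
  have isolated: "k = 1 \<and> l = 0" if "u < k" "\<forall>w<l. (u, w) \<notin> F" for u
  proof -
    from that have "is_top k l F {u} {}" unfolding is_top_def by auto
    with indecomposable_top_whole[OF I] have u: "{u} = {..<k}" and "{} = {..<l}" by auto
    moreover have "k = card {u}" by (simp only: u card_lessThan)
    ultimately show ?thesis by auto
  qed
  show ?thesis
  proof (rule ccontr)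
    assume H: "\<not> ?thesis"
    then consider "k = 0" | "l = 0" | "k = 1" "l \<noteq> 0" | "l = 1" "k \<noteq> 0" by linarith
    then show False
    proof cases
      case 1
      with ne full[of 0] H show False by auto
    next
      case 2
      with ne isolated[of 0] H show False by auto
    next
      case 3
      with isolated[of 0] obtain w where "w < l" "(0, w) \<in> F" by auto
      with full[of w] 3 show False by auto
    next
      case 4
      with full[of 0] obtain u where "u < k" "(u, 0) \<notin> F" by auto
      with isolated[of u] 4 show False by auto
    qed
  qed
qed

lemma indecomposable_single_vertex:
  "indecomposable 1 0 F \<longleftrightarrow> F = {}" "indecomposable 0 1 F \<longleftrightarrow> F = {}"
  by (auto simp: indecomposable_def min_top_def is_top_def bigraphs_def lessThan_Suc subset_singleton_iff)

lemma icount_eq_tcount: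
  "icount k l = tcount k l + (if k = 1 \<and> l = 0 then 1 else 0) + (if k = 0 \<and> l = 1 then 1 else 0)"
proof -
  consider "k \<ge> 2 \<and> l \<ge> 2" | "k = 1 \<and> l = 0" | "k = 0 \<and> l = 1"
    | "\<not> (k \<ge> 2 \<and> l \<ge> 2)" "\<not> (k = 1 \<and> l = 0)" "\<not> (k = 0 \<and> l = 1)" by blast
  then show ?thesis
  proof cases
    case 1
    then have "{F. indecomposable k l F} = {F. is_tangle k l F}"
      using tangle_imp_indecomposable indecomposable_imp_tangle by blast
    with 1 show ?thesis unfolding icount_def tcount_def by simp
  next
    case 2
    then have "{F. indecomposable k l F} = {{}}" "{F. is_tangle k l F} = {}"
      using indecomposable_single_vertex unfolding is_tangle_def by auto
    with 2 show ?thesis unfolding icount_def tcount_def by (simp only:) (simp add: quotient_def)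
  next
    case 3
    then have "{F. indecomposable k l F} = {{}}" "{F. is_tangle k l F} = {}"
      using indecomposable_single_vertex unfolding is_tangle_def by auto
    with 3 show ?thesis unfolding icount_def tcount_def by (simp only:) (simp add: quotient_def)
  next
    case 4
    then have "{F. indecomposable k l F} = {}" "{F. is_tangle k l F} = {}"
      using indecomposable_size unfolding is_tangle_def by auto
    with 4 show ?thesis unfolding icount_def tcount_def by (simp only:) simp
  qed
qed

section \<open>Generating functions\<close>

unbundle fps_syntax

lemma bivar_gf_nth [simp]: "bivar_gf c $ i $ j = of_nat (c i j)"
  by (simp add: bivar_gf_def)

lemma bcount_0_0: "bcount 0 0 = 1"
proof -
  have "bigraphs 0 0 = {{}}" unfolding bigraphs_def by auto
  then show ?thesis unfolding bcount_def by (simp add: quotient_def)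
qed

lemma icount_0_0: "icount 0 0 = 0"
proof -
  have "{F. indecomposable 0 0 F} = {}" using indecomposable_size[of 0 0] by auto
  then show ?thesis unfolding icount_def by (simp only:) simp
qed

lemma bivar_gf_icount: "bivar_gf icount = bivar_gf tcount + X_var + Y_var"
  by (intro fps_ext) (simp add: icount_eq_tcount)

lemma bivar_gf_bcount_mult: "bivar_gf bcount * (1 - bivar_gf icount) = 1"
proof (intro fps_ext)
  fix i j
  have "(bivar_gf bcount * bivar_gf icount) $ i $ j = (\<Sum>a\<le>i. \<Sum>b\<le>j. of_nat (bcount a b * icount (i - a) (j - b)))"
    by (simp add: fps_mult_nth fps_sum_nth atLeast0AtMost)
  also have "\<dots> = (if i = 0 \<and> j = 0 then 0 else of_nat (bcount i j))"
    using bcount_recurrence[of i j] by (simp add: icount_0_0)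
  finally show "(bivar_gf bcount * (1 - bivar_gf icount)) $ i $ j = (1 :: rat fps fps) $ i $ j"
    by (simp add: algebra_simps bcount_0_0)
qed

lemma inverse_bivar_gf_bcount: "inverse (bivar_gf bcount) = 1 - bivar_gf icount"
proof -
  let ?f = "bivar_gf bcount" and ?g = "1 - bivar_gf icount"
  have fg: "?f * ?g = 1" by (rule bivar_gf_bcount_mult)
  then have "?f $ 0 * ?g $ 0 = 1" using fps_mult_nth_0[of ?f ?g] by simp
  then have inv0: "inverse (?f $ 0) = ?g $ 0" by (rule fps_inverse_unique)
  have "fps_right_inverse ?f (?g $ 0) = ?g"
    using fg \<open>?f $ 0 * ?g $ 0 = 1\<close> by (intro fps_lr_inverse_unique_ring1(2)) (simp_all add: mult.commute)
  moreover have "inverse ?f = fps_right_inverse ?f (inverse (?f $ 0))"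
    by (rule fps_inverse_def)
  ultimately show ?thesis
    unfolding inv0 by simp
qed

theorem theorem4p2:
  shows "bivar_gf tcount = 1 - X_var - Y_var - inverse (bivar_gf bcount)"
  unfolding inverse_bivar_gf_bcount bivar_gf_icount by (simp add: algebra_simps)

end
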